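(* Let $s\ge2$, $\alpha>0$, and for integers $k\ge2$ let $I_k=[k,k+\alpha\log k]$ and $F_k=\{sA\cap I_k=\emptyset\}$. If $2\le i<j$ and $I_i\cap I_j=\emptyset$, then $$\prod_{\omega\in\Omega_{I_i}\cup\Omega_{I_j}}P(E_\omega^c)\le P(F_i)P(F_j)\big(1+O(j^{-1/s}\log j)\big),$$ with implied constant depending only on $s$ and $\alpha$.
   Context: Let $A\subseteq\{1,2,\dots\}$ be a random set in which the events $\{n\in A\}$ are mutually independent with $P(n\in A)=\frac1s n^{-1+1/s}$, and $sA=\{a_1+\cdots+a_s:a_i\in A\}$. For a finite set $\omega$ of distinct positive integers, $E_\omega=\{\omega\subseteq A\}$ and $E_\omega^c=\{\omega\not\subseteq A\}$. For $\omega=\{x_1,\dots,x_r\}$ define $\sigma(\omega)=\{a_1x_1+\cdots+a_rx_r: a_1+\cdots+a_r=s,\ a_i\ge1 \text{ integers}\}$. For an interval $I$, $\Omega_I=\{\omega:\sigma(\omega)\cap I\neq\emptyset\}$. *)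

theory Defs
  imports "HOL-Probability.Probability"
begin

definition incl_prob :: "nat \<Rightarrow> nat \<Rightarrow> real" where
  "incl_prob s n = (if n = 0 then 0 else (1 / real s) * real n powr (-1 + 1 / real s))"

definition RS :: "nat \<Rightarrow> (nat \<Rightarrow> bool) measure" where
  "RS s = PiM UNIV (\<lambda>n. measure_pmf (bernoulli_pmf (incl_prob s n)))"

definition setA :: "(nat \<Rightarrow> bool) \<Rightarrow> nat set" where
  "setA x = {n. 1 \<le> n \<and> x n}"

definition sumset :: "nat \<Rightarrow> nat set \<Rightarrow> nat set" where
  "sumset s A = {(\<Sum>i<s. f i) | f. \<forall>i<s. f i \<in> A}"

definition sigma_set :: "nat \<Rightarrow> nat set \<Rightarrow> nat set" where
  "sigma_set s \<omega> = {(\<Sum>x\<in>\<omega>. a x * x) | a :: nat \<Rightarrow> nat.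
      (\<forall>x\<in>\<omega>. 1 \<le> a x) \<and> (\<Sum>x\<in>\<omega>. a x) = s}"

definition Omega :: "nat \<Rightarrow> real set \<Rightarrow> nat set set" where
  "Omega s I = {\<omega>. finite \<omega> \<and> (\<forall>x\<in>\<omega>. 1 \<le> x) \<and> real ` sigma_set s \<omega> \<inter> I \<noteq> {}}"

definition Ik :: "real \<Rightarrow> nat \<Rightarrow> real set" where
  "Ik \<alpha> k = {real k .. real k + \<alpha> * ln (real k)}"

definition Ec :: "nat \<Rightarrow> nat set \<Rightarrow> (nat \<Rightarrow> bool) set" where
  "Ec s \<omega> = {x \<in> space (RS s). \<not> \<omega> \<subseteq> setA x}"

definition Fk :: "nat \<Rightarrow> real \<Rightarrow> nat \<Rightarrow> (nat \<Rightarrow> bool) set" where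
  "Fk s \<alpha> k = {x \<in> space (RS s). real ` sumset s (setA x) \<inter> Ik \<alpha> k = {}}"

end

theory Submission
  imports Defs
begin

text \<open>
  Each event \<open>E\<^sub>\<omega>\<^sup>c\<close> is decreasing in the independent coordinates of the random set, so
  Harris' inequality bounds the product of their probabilities over \<open>\<Omega>\<^sub>I\<close> by the probability
  of their intersection, which is \<open>F\<^sub>k\<close>. As \<open>\<Prod>(A \<union> B) \<cdot> \<Prod>(A \<inter> B) = \<Prod>A \<cdot> \<Prod>B\<close>, it remains to
  bound the product over \<open>\<Omega>\<^sub>I\<^sub>i \<inter> \<Omega>\<^sub>I\<^sub>j\<close> from below by \<open>exp (-2 \<Sum> P(E\<^sub>\<omega>))\<close>.
  A set \<open>\<omega>\<close> whose sums meet two disjoint intervals has fewer than \<open>s\<close> elements. Removing its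
  largest element \<open>m \<ge> j / s\<close> leaves at most \<open>s - 2\<close> elements, of total weight
  \<open>O(j powr ((s - 2) / s))\<close>, while \<open>m\<close> lies in one of \<open>O(s\<^sup>s)\<close> intervals of length \<open>\<alpha> log j\<close>
  and has probability \<open>O(j powr (-1 + 1 / s))\<close>; hence \<open>\<Sum> P(E\<^sub>\<omega>) = O(j powr (-1 / s) log j)\<close>.
\<close>

section \<open>Harris' inequality for finitely many Bernoulli variables\<close>

definition bernoulli_weight :: "(nat \<Rightarrow> real) \<Rightarrow> nat set \<Rightarrow> (nat \<Rightarrow> bool) \<Rightarrow> real" where
  "bernoulli_weight p J y = (\<Prod>n\<in>J. if y n then p n else 1 - p n)"

definition bernoulli_expectation ::
    "(nat \<Rightarrow> real) \<Rightarrow> nat set \<Rightarrow> ((nat \<Rightarrow> bool) \<Rightarrow> real) \<Rightarrow> real" where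
  "bernoulli_expectation p J F = (\<Sum>y\<in>J \<rightarrow>\<^sub>E UNIV. bernoulli_weight p J y * F y)"

context
  fixes p :: "nat \<Rightarrow> real"
  assumes p_prob: "\<And>n. 0 \<le> p n \<and> p n \<le> 1"
begin

lemma bernoulli_weight_nonneg: "0 \<le> bernoulli_weight p J y"
  unfolding bernoulli_weight_def using p_prob by (intro prod_nonneg) auto

lemma bernoulli_expectation_mono:
  "(\<And>y. F y \<le> G y) \<Longrightarrow> bernoulli_expectation p J F \<le> bernoulli_expectation p J G"
  unfolding bernoulli_expectation_def by (intro sum_mono mult_left_mono bernoulli_weight_nonneg)

lemma bernoulli_expectation_nonneg:
  "(\<And>y. 0 \<le> F y) \<Longrightarrow> 0 \<le> bernoulli_expectation p J F"
  unfolding bernoulli_expectation_def by (intro sum_nonneg mult_nonneg_nonneg bernoulli_weight_nonneg)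

end

lemma bernoulli_expectation_insert:
  assumes "finite J" "a \<notin> J"
  shows "bernoulli_expectation p (insert a J) F =
    (1 - p a) * bernoulli_expectation p J (\<lambda>y. F (y(a := False))) +
    p a * bernoulli_expectation p J (\<lambda>y. F (y(a := True)))"
proof -
  let ?upd = "\<lambda>(b, y). y(a := b)"
  have inj: "inj_on ?upd (UNIV \<times> (J \<rightarrow>\<^sub>E UNIV))"
    using assms(2) by (auto simp: inj_on_def PiE_def extensional_def fun_eq_iff)
  have weight: "bernoulli_weight p (insert a J) (y(a := b)) =
      (if b then p a else 1 - p a) * bernoulli_weight p J y" for y b
  proof -
    have "(\<Prod>n\<in>J. if (y(a := b)) n then p n else 1 - p n) = (\<Prod>n\<in>J. if y n then p n else 1 - p n)"
      using assms by (intro prod.cong) auto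
    then show ?thesis unfolding bernoulli_weight_def using assms by simp
  qed
  have "bernoulli_expectation p (insert a J) F =
      (\<Sum>z\<in>UNIV \<times> (J \<rightarrow>\<^sub>E UNIV). bernoulli_weight p (insert a J) (?upd z) * F (?upd z))"
    unfolding bernoulli_expectation_def PiE_insert_eq by (subst sum.reindex[OF inj]) (simp add: comp_def)
  also have "\<dots> = (\<Sum>b\<in>UNIV. \<Sum>y\<in>J \<rightarrow>\<^sub>E UNIV. bernoulli_weight p (insert a J) (y(a := b)) * F (y(a := b)))"
    by (subst sum.cartesian_product) (simp add: case_prod_beta)
  finally show ?thesis
    unfolding bernoulli_expectation_def weight UNIV_bool by (simp add: sum_distrib_left mult.assoc)
qed

lemma bernoulli_expectation_const_one:
  assumes "finite J"
  shows "bernoulli_expectation p J (\<lambda>_. 1) = 1"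
proof -
  have "bernoulli_expectation p J (\<lambda>_. 1) =
      (\<Sum>y\<in>J \<rightarrow>\<^sub>E UNIV. \<Prod>n\<in>J. (\<lambda>n b. if b then p n else 1 - p n) n (y n))"
    unfolding bernoulli_expectation_def bernoulli_weight_def by simp
  also have "\<dots> = (\<Prod>n\<in>J. \<Sum>b\<in>UNIV. if b then p n else 1 - p n)"
    using assms by (intro prod_sum_PiE[symmetric]) auto
  finally show ?thesis by (simp add: UNIV_bool)
qed

lemma bernoulli_expectation_all:
  assumes "finite J"
  shows "bernoulli_expectation p J (\<lambda>y. of_bool (\<forall>n\<in>J. y n)) = (\<Prod>n\<in>J. p n)"
proof -
  have "bernoulli_expectation p J (\<lambda>y. of_bool (\<forall>n\<in>J. y n)) =
      (\<Sum>y\<in>J \<rightarrow>\<^sub>E UNIV. \<Prod>n\<in>J. (\<lambda>n b. if b then p n else 0) n (y n))"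
    unfolding bernoulli_expectation_def bernoulli_weight_def
  proof (intro sum.cong refl)
    fix y :: "nat \<Rightarrow> bool"
    show "(\<Prod>n\<in>J. if y n then p n else 1 - p n) * of_bool (\<forall>n\<in>J. y n) =
        (\<Prod>n\<in>J. (\<lambda>n b. if b then p n else 0) n (y n))"
      using assms by (cases "\<forall>n\<in>J. y n") (auto cong: prod.cong intro: prod_zero)
  qed
  also have "\<dots> = (\<Prod>n\<in>J. \<Sum>b\<in>UNIV. if b then p n else 0)"
    using assms by (intro prod_sum_PiE[symmetric]) auto
  finally show ?thesis by (simp add: UNIV_bool)
qed

lemma bernoulli_expectation_diff:
  "bernoulli_expectation p J (\<lambda>y. F y - G y) = bernoulli_expectation p J F - bernoulli_expectation p J G"
  unfolding bernoulli_expectation_def by (simp add: sum_subtractf right_diff_distrib)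

lemma harris_inequality:
  assumes "finite J" and p_prob: "\<And>n. 0 \<le> p n \<and> p n \<le> 1"
    and "antimono F" "antimono G"
  shows "bernoulli_expectation p J F * bernoulli_expectation p J G \<le>
    bernoulli_expectation p J (\<lambda>y. F y * G y)"
  using assms(1,3,4)
proof (induction J arbitrary: F G rule: finite_induct)
  case empty
  then show ?case by (simp add: bernoulli_expectation_def bernoulli_weight_def)
next
  case (insert a J)
  let ?E = "bernoulli_expectation p J"
  define F0 F1 G0 G1
    where F0_def: "F0 = (\<lambda>y. F (y(a := False)))" and F1_def: "F1 = (\<lambda>y. F (y(a := True)))"
      and G0_def: "G0 = (\<lambda>y. G (y(a := False)))" and G1_def: "G1 = (\<lambda>y. G (y(a := True)))"
  have upd_mono: "y \<le> z \<Longrightarrow> y(a := b) \<le> z(a := b)" for y z :: "nat \<Rightarrow> bool" and b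
    by (simp add: le_fun_def)
  have upd_le: "y(a := False) \<le> y(a := True)" for y :: "nat \<Rightarrow> bool"
    by (simp add: le_fun_def)
  have anti: "antimono F0" "antimono F1" "antimono G0" "antimono G1"
    using insert.prems upd_mono unfolding F0_def F1_def G0_def G1_def antimono_def by meson+
  have F10: "?E F1 \<le> ?E F0" and G10: "?E G1 \<le> ?E G0"
    using insert.prems upd_le unfolding F0_def F1_def G0_def G1_def antimono_def
    by (auto intro!: bernoulli_expectation_mono p_prob)
  have chebyshev: "(1 - q) * (A0 * B0) + q * (A1 * B1) - ((1 - q) * A0 + q * A1) * ((1 - q) * B0 + q * B1)
     = q * (1 - q) * ((A0 - A1) * (B0 - B1))" for q A0 A1 B0 B1 :: real
    by (simp add: algebra_simps)
  have pa: "0 \<le> p a" "p a \<le> 1" using p_prob by auto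
  have "((1 - p a) * ?E F0 + p a * ?E F1) * ((1 - p a) * ?E G0 + p a * ?E G1)
      \<le> (1 - p a) * (?E F0 * ?E G0) + p a * (?E F1 * ?E G1)"
    using chebyshev[of "p a" "?E F0" "?E G0" "?E F1" "?E G1"] F10 G10 pa
    by (smt (verit, best) mult_nonneg_nonneg)
  also have "\<dots> \<le> (1 - p a) * ?E (\<lambda>y. F0 y * G0 y) + p a * ?E (\<lambda>y. F1 y * G1 y)"
    using insert.IH anti pa by (intro add_mono mult_left_mono) auto
  finally show ?case using insert.hyps
    by (simp add: bernoulli_expectation_insert F0_def F1_def G0_def G1_def)
qed

lemma harris_inequality_avoid:
  assumes J: "finite J" and p_prob: "\<And>n. 0 \<le> p n \<and> p n \<le> 1" and "finite W"
  shows "(\<Prod>\<omega>\<in>W. bernoulli_expectation p J (\<lambda>y. of_bool (\<not> (\<forall>n\<in>\<omega>. y n))))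
    \<le> bernoulli_expectation p J (\<lambda>y. of_bool (\<forall>\<omega>\<in>W. \<not> (\<forall>n\<in>\<omega>. y n)))"
  using \<open>finite W\<close>
proof (induction W rule: finite_induct)
  case empty
  then show ?case using bernoulli_expectation_const_one[OF J] by simp
next
  case (insert \<omega> W)
  let ?E = "bernoulli_expectation p J"
  let ?F = "\<lambda>y. of_bool (\<not> (\<forall>n\<in>\<omega>. y n)) :: real"
  let ?G = "\<lambda>y. of_bool (\<forall>\<omega>\<in>W. \<not> (\<forall>n\<in>\<omega>. y n)) :: real"
  have "antimono ?F" unfolding antimono_def le_fun_def by auto
  have "antimono ?G" unfolding antimono_def le_fun_def by (auto; blast)
  have "(\<Prod>\<omega>\<in>insert \<omega> W. ?E (\<lambda>y. of_bool (\<not> (\<forall>n\<in>\<omega>. y n)))) =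
      ?E ?F * (\<Prod>\<omega>\<in>W. ?E (\<lambda>y. of_bool (\<not> (\<forall>n\<in>\<omega>. y n))))"
    using insert.hyps by simp
  also have "\<dots> \<le> ?E ?F * ?E ?G"
    by (intro mult_left_mono insert.IH bernoulli_expectation_nonneg p_prob) auto
  also have "\<dots> \<le> ?E (\<lambda>y. ?F y * ?G y)"
    by (intro harris_inequality J p_prob \<open>antimono ?F\<close> \<open>antimono ?G\<close>)
  also have "(\<lambda>y. ?F y * ?G y) = (\<lambda>y. of_bool (\<forall>\<omega>\<in>insert \<omega> W. \<not> (\<forall>n\<in>\<omega>. y n)))"
    by auto
  finally show ?case .
qed

section \<open>The random set\<close>

lemma incl_prob_nonneg: "0 \<le> incl_prob s n"
  unfolding incl_prob_def by auto

lemma incl_prob_le_inverse: "incl_prob s n \<le> 1 / real s"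
proof (cases "n = 0 \<or> s = 0")
  case False
  have "real n powr (-1 + 1 / real s) \<le> real 1 powr (-1 + 1 / real s)"
    using False by (intro powr_mono2') (auto simp: field_simps)
  then show ?thesis using False unfolding incl_prob_def by (simp add: divide_right_mono)
qed (auto simp: incl_prob_def)

lemma incl_prob_le_one: "incl_prob s n \<le> 1"
proof (cases "s = 0")
  case False
  then have "1 / real s \<le> 1" by simp
  then show ?thesis using incl_prob_le_inverse[of s n] by linarith
qed (simp add: incl_prob_def)

lemma incl_prob_bounds: "0 \<le> incl_prob s n \<and> incl_prob s n \<le> 1"
  using incl_prob_nonneg incl_prob_le_one by blast

lemma space_RS: "space (RS s) = UNIV"
  unfolding RS_def by (simp add: space_PiM)

lemma measure_RS_cylinder:
  assumes J: "finite J"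
  shows "measure (RS s) {x. restrict x J \<in> X} =
    bernoulli_expectation (incl_prob s) J (\<lambda>y. of_bool (y \<in> X))"
proof -
  define M where "M = (\<lambda>n. measure_pmf (bernoulli_pmf (incl_prob s n)))"
  interpret product_prob_space M UNIV
    unfolding M_def by (intro product_prob_spaceI) (simp add: measure_pmf.prob_space_axioms)
  have RS: "RS s = PiM UNIV M" unfolding RS_def M_def by simp
  define cyl where "cyl = (\<lambda>y. prod_emb UNIV M J (PiE J (\<lambda>n. {y n})))"
  let ?Y = "X \<inter> (J \<rightarrow>\<^sub>E UNIV)"
  have cyl_eq: "cyl y = {x. restrict x J = y}" if "y \<in> J \<rightarrow>\<^sub>E UNIV" for y
    using that unfolding cyl_def prod_emb_def M_def
    by (auto simp: space_PiM PiE_def extensional_def restrict_def fun_eq_iff)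
  have "{x. restrict x J \<in> X} = (\<Union>y\<in>?Y. cyl y)"
    using cyl_eq by (auto simp: PiE_def extensional_def)
  then have "measure (RS s) {x. restrict x J \<in> X} = (\<Sum>y\<in>?Y. measure (PiM UNIV M) (cyl y))"
    unfolding RS
  proof (simp only:, intro measure_finite_Union)
    show "finite ?Y" using J by (intro finite_Int disjI2 finite_PiE) auto
    show "cyl ` ?Y \<subseteq> sets (PiM UNIV M)"
      unfolding cyl_def using J by (auto intro!: sets_PiM_I simp: M_def)
    show "disjoint_family_on cyl ?Y"
      unfolding disjoint_family_on_def using cyl_eq by auto
    show "emeasure (PiM UNIV M) (cyl y) \<noteq> \<infinity>" for y
      by (simp add: emeasure_eq_measure)
  qed
  also have "\<dots> = (\<Sum>y\<in>?Y. bernoulli_weight (incl_prob s) J y)"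
  proof (intro sum.cong refl)
    fix y
    have "measure (PiM UNIV M) (cyl y) = (\<Prod>n\<in>J. measure (M n) {y n})"
      unfolding cyl_def using J by (intro measure_PiM_emb) (auto simp: M_def)
    also have "\<dots> = bernoulli_weight (incl_prob s) J y"
      unfolding bernoulli_weight_def M_def using incl_prob_bounds
      by (intro prod.cong refl) (simp add: measure_pmf_single)
    finally show "measure (PiM UNIV M) (cyl y) = bernoulli_weight (incl_prob s) J y" .
  qed
  also have "\<dots> = bernoulli_expectation (incl_prob s) J (\<lambda>y. of_bool (y \<in> X))"
    unfolding bernoulli_expectation_def using J
    by (simp add: sum.inter_restrict[symmetric] Int_commute finite_PiE)
  finally show ?thesis .
qed

lemma subset_setA_iff: "\<forall>n\<in>\<omega>. 1 \<le> n \<Longrightarrow> \<omega> \<subseteq> setA x \<longleftrightarrow> (\<forall>n\<in>\<omega>. x n)"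
  unfolding setA_def by auto

lemma measure_Ec:
  assumes "finite \<omega>" "\<forall>n\<in>\<omega>. 1 \<le> n"
  shows "measure (RS s) (Ec s \<omega>) = 1 - (\<Prod>n\<in>\<omega>. incl_prob s n)"
proof -
  let ?E = "bernoulli_expectation (incl_prob s) \<omega>"
  have "Ec s \<omega> = {x. restrict x \<omega> \<in> {y. \<not> (\<forall>n\<in>\<omega>. y n)}}"
    unfolding Ec_def space_RS using subset_setA_iff[OF assms(2)] by auto
  then have "measure (RS s) (Ec s \<omega>) = ?E (\<lambda>y. of_bool (y \<in> {y. \<not> (\<forall>n\<in>\<omega>. y n)}))"
    using measure_RS_cylinder[OF assms(1)] by (simp only:)
  also have "\<dots> = ?E (\<lambda>y. 1 - of_bool (\<forall>n\<in>\<omega>. y n))"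
    by (rule arg_cong[where f = ?E]) auto
  also have "\<dots> = 1 - (\<Prod>n\<in>\<omega>. incl_prob s n)"
    using assms(1)
    by (simp add: bernoulli_expectation_diff bernoulli_expectation_const_one bernoulli_expectation_all)
  finally show ?thesis .
qed

lemma prod_measure_Ec_le:
  assumes "finite W" and W: "\<forall>\<omega>\<in>W. finite \<omega> \<and> (\<forall>n\<in>\<omega>. 1 \<le> n)"
  shows "(\<Prod>\<omega>\<in>W. measure (RS s) (Ec s \<omega>)) \<le> measure (RS s) {x. \<forall>\<omega>\<in>W. \<not> \<omega> \<subseteq> setA x}"
proof -
  define J where "J = \<Union>W"
  have J: "finite J" unfolding J_def using assms by auto
  have setA_iff: "\<omega> \<subseteq> setA x \<longleftrightarrow> (\<forall>n\<in>\<omega>. restrict x J n)" if "\<omega> \<in> W" for x \<omega>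
    using that W subset_setA_iff[of \<omega>] unfolding J_def by auto
  have Ec_eq: "measure (RS s) (Ec s \<omega>) =
      bernoulli_expectation (incl_prob s) J (\<lambda>y. of_bool (\<not> (\<forall>n\<in>\<omega>. y n)))" if "\<omega> \<in> W" for \<omega>
  proof -
    have "Ec s \<omega> = {x. restrict x J \<in> {y. \<not> (\<forall>n\<in>\<omega>. y n)}}"
      unfolding Ec_def space_RS using setA_iff[OF that] by auto
    then show ?thesis
      using measure_RS_cylinder[OF J, of s "{y. \<not> (\<forall>n\<in>\<omega>. y n)}"] by (simp only: mem_Collect_eq)
  qed
  have avoid_eq: "{x. \<forall>\<omega>\<in>W. \<not> \<omega> \<subseteq> setA x} = {x. restrict x J \<in> {y. \<forall>\<omega>\<in>W. \<not> (\<forall>n\<in>\<omega>. y n)}}"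
    using setA_iff by auto
  show ?thesis
    unfolding avoid_eq measure_RS_cylinder[OF J]
    using Ec_eq harris_inequality_avoid[OF J incl_prob_bounds[of s] \<open>finite W\<close>]
    by (simp cong: prod.cong)
qed

section \<open>The families \<open>\<Omega>\<^sub>I\<close>\<close>

lemma sumset_eq_UN_sigma_set:
  "sumset s A = (\<Union>\<omega>\<in>{\<omega>. finite \<omega> \<and> \<omega> \<subseteq> A}. sigma_set s \<omega>)"
proof (intro equalityI subsetI)
  fix m assume "m \<in> sumset s A"
  then obtain f where f: "\<forall>i<s. f i \<in> A" and m: "m = (\<Sum>i<s. f i)"
    unfolding sumset_def by auto
  define \<omega> where "\<omega> = f ` {..<s}"
  define a where "a = (\<lambda>y. card {i\<in>{..<s}. f i = y})"
  have "(\<Sum>y\<in>\<omega>. a y) = card {..<s}"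
    unfolding \<omega>_def a_def using sum.image_gen[of "{..<s}" "\<lambda>_. 1 :: nat" f] by simp
  moreover have "(\<Sum>y\<in>\<omega>. a y * y) = (\<Sum>i<s. f i)"
    unfolding \<omega>_def a_def using sum.image_gen[of "{..<s}" f f] by simp
  moreover have "\<forall>y\<in>\<omega>. 1 \<le> a y"
    unfolding \<omega>_def a_def by (auto simp: Suc_le_eq card_gt_0_iff)
  ultimately have "m \<in> sigma_set s \<omega>"
    unfolding sigma_set_def m by (auto intro!: exI[of _ a])
  moreover have "finite \<omega> \<and> \<omega> \<subseteq> A" using f unfolding \<omega>_def by auto
  ultimately show "m \<in> (\<Union>\<omega>\<in>{\<omega>. finite \<omega> \<and> \<omega> \<subseteq> A}. sigma_set s \<omega>)" by blast
next
  fix m assume "m \<in> (\<Union>\<omega>\<in>{\<omega>. finite \<omega> \<and> \<omega> \<subseteq> A}. sigma_set s \<omega>)"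
  then obtain \<omega> a where fin: "finite \<omega>" and "\<omega> \<subseteq> A" and a: "(\<Sum>y\<in>\<omega>. a y) = s"
    and m: "m = (\<Sum>y\<in>\<omega>. a y * y)"
    unfolding sigma_set_def by blast
  \<comment> \<open>list every \<open>y\<close> with multiplicity \<open>a y\<close> by enumerating \<open>\<omega> \<times> {..<a y}\<close>\<close>
  define T where "T = Sigma \<omega> (\<lambda>y. {..<a y})"
  have "finite T" "card T = s" unfolding T_def using fin a by auto
  then obtain h where h: "bij_betw h {..<s} T"
    using finite_same_card_bij[of "{..<s}" T] by auto
  have "h i \<in> T" if "i < s" for i
    using h that by (auto simp: bij_betw_def)
  then have "\<forall>i<s. fst (h i) \<in> A"
    using \<open>\<omega> \<subseteq> A\<close> unfolding T_def by (metis SigmaD1 prod.collapse subsetD)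
  moreover have "(\<Sum>i<s. fst (h i)) = m"
  proof -
    have "(\<Sum>i<s. fst (h i)) = (\<Sum>z\<in>T. fst z)"
      using sum.reindex_bij_betw[OF h, of fst] by simp
    also have "\<dots> = (\<Sum>y\<in>\<omega>. \<Sum>t\<in>{..<a y}. y)"
      unfolding T_def using fin by (subst sum.Sigma) (auto simp: case_prod_beta)
    also have "\<dots> = m" unfolding m by simp
    finally show ?thesis .
  qed
  ultimately show "m \<in> sumset s A"
    unfolding sumset_def by blast
qed

lemma Fk_eq_Omega:
  "Fk s \<alpha> k = {x. \<forall>\<omega>\<in>Omega s (Ik \<alpha> k). \<not> \<omega> \<subseteq> setA x}"
proof -
  have pos: "\<omega> \<subseteq> setA x \<Longrightarrow> \<forall>n\<in>\<omega>. 1 \<le> n" for \<omega> x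
    unfolding setA_def by auto
  have "real ` sumset s (setA x) \<inter> Ik \<alpha> k = {} \<longleftrightarrow>
      (\<forall>\<omega>\<in>Omega s (Ik \<alpha> k). \<not> \<omega> \<subseteq> setA x)" for x
  proof -
    have "real ` sumset s (setA x) \<inter> Ik \<alpha> k = {} \<longleftrightarrow>
        (\<forall>\<omega>. finite \<omega> \<and> \<omega> \<subseteq> setA x \<longrightarrow> real ` sigma_set s \<omega> \<inter> Ik \<alpha> k = {})"
      unfolding sumset_eq_UN_sigma_set by blast
    also have "\<dots> \<longleftrightarrow> (\<forall>\<omega>\<in>Omega s (Ik \<alpha> k). \<not> \<omega> \<subseteq> setA x)"
      unfolding Omega_def using pos by blast
    finally show ?thesis .
  qed
  then show ?thesis
    unfolding Fk_def space_RS by blast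
qed

lemma OmegaE:
  assumes "\<omega> \<in> Omega s I"
  obtains a where "finite \<omega>" "\<forall>x\<in>\<omega>. 1 \<le> x" "\<forall>x\<in>\<omega>. 1 \<le> a x" "(\<Sum>x\<in>\<omega>. a x) = s"
    "real (\<Sum>x\<in>\<omega>. a x * x) \<in> I"
proof -
  obtain m where "m \<in> sigma_set s \<omega>" "real m \<in> I" "finite \<omega>" "\<forall>x\<in>\<omega>. 1 \<le> x"
    using assms unfolding Omega_def by blast
  then show ?thesis
    using that unfolding sigma_set_def by blast
qed

lemma Omega_subset_atLeastAtMost:
  assumes "I \<subseteq> {..b}" "\<omega> \<in> Omega s I"
  shows "\<omega> \<subseteq> {1..nat \<lfloor>b\<rfloor>}"
proof
  fix x assume x: "x \<in> \<omega>"
  obtain a where fin: "finite \<omega>" and pos: "\<forall>x\<in>\<omega>. 1 \<le> x" and a: "\<forall>x\<in>\<omega>. 1 \<le> a x"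
    and sum_in: "real (\<Sum>x\<in>\<omega>. a x * x) \<in> I"
    using OmegaE[OF assms(2)] by metis
  have "x \<le> a x * x" using a x by simp
  also have "\<dots> \<le> (\<Sum>x\<in>\<omega>. a x * x)" using fin x by (intro member_le_sum) auto
  finally have "real x \<le> real (\<Sum>x\<in>\<omega>. a x * x)" by (simp only: of_nat_le_iff)
  also have "\<dots> \<le> b" using sum_in assms(1) by (simp add: subset_eq)
  finally have "x \<le> nat \<lfloor>b\<rfloor>" by (rule le_nat_floor)
  then show "x \<in> {1..nat \<lfloor>b\<rfloor>}" using pos x by simp
qed

lemma finite_Omega:
  assumes "I \<subseteq> {..b}"
  shows "finite (Omega s I)"
proof (rule finite_subset)
  show "Omega s I \<subseteq> Pow {1..nat \<lfloor>b\<rfloor>}"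
    using Omega_subset_atLeastAtMost[OF assms] by blast
qed simp

lemma Ik_subset_atMost: "Ik \<alpha> k \<subseteq> {..real k + \<alpha> * ln (real k)}"
  unfolding Ik_def by auto

text \<open>An \<open>\<omega>\<close> with \<open>s\<close> elements has the single representation \<open>\<Sum>\<omega>\<close>, so it cannot
  meet two disjoint intervals.\<close>
lemma card_less_of_Omega_disjoint:
  assumes "\<omega> \<in> Omega s I" "\<omega> \<in> Omega s I'" "I \<inter> I' = {}"
  shows "card \<omega> < s"
proof -
  have sum_eq: "(\<Sum>x\<in>\<omega>. c x * x) = \<Sum>\<omega>"
    if "card \<omega> = s" "finite \<omega>" "\<forall>x\<in>\<omega>. 1 \<le> c x" "(\<Sum>x\<in>\<omega>. c x) = s" for c :: "nat \<Rightarrow> nat"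
  proof -
    have "(\<Sum>x\<in>\<omega>. c x) = (\<Sum>x\<in>\<omega>. (c x - 1) + 1)"
      using that(3) by (intro sum.cong) auto
    also have "\<dots> = (\<Sum>x\<in>\<omega>. c x - 1) + card \<omega>"
      by (simp only: sum.distrib card_eq_sum)
    finally have "(\<Sum>x\<in>\<omega>. c x - 1) = 0" using that(1,4) by linarith
    then have "\<forall>x\<in>\<omega>. c x = 1" using that(2,3) by (auto intro: le_antisym)
    then show ?thesis by simp
  qed
  obtain a where a: "finite \<omega>" "\<forall>x\<in>\<omega>. 1 \<le> a x" "(\<Sum>x\<in>\<omega>. a x) = s"
    "real (\<Sum>x\<in>\<omega>. a x * x) \<in> I" using OmegaE[OF assms(1)] by metis
  obtain b where b: "\<forall>x\<in>\<omega>. 1 \<le> b x" "(\<Sum>x\<in>\<omega>. b x) = s"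
    "real (\<Sum>x\<in>\<omega>. b x * x) \<in> I'" using OmegaE[OF assms(2)] by metis
  have "card \<omega> = (\<Sum>x\<in>\<omega>. 1)" by simp
  also have "\<dots> \<le> s" using a(2,3) sum_mono[of \<omega> "\<lambda>_. 1" a] by simp
  finally have "card \<omega> \<le> s" .
  moreover have "card \<omega> \<noteq> s"
  proof
    assume card: "card \<omega> = s"
    have "real (\<Sum>\<omega>) \<in> I" using sum_eq[OF card a(1-3)] a(4) by simp
    moreover have "real (\<Sum>\<omega>) \<in> I'" using sum_eq[OF card a(1) b(1,2)] b(3) by simp
    ultimately show False using assms(3) by blast
  qed
  ultimately show ?thesis by simp
qed

section \<open>Estimates for sets meeting two intervals\<close>

lemma powr_concave_step:
  fixes \<theta> :: real
  assumes "0 < \<theta>" "\<theta> \<le> 1"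
  shows "real N powr \<theta> + \<theta> * (real N + 1) powr (\<theta> - 1) \<le> (real N + 1) powr \<theta>"
proof (cases "N = 0")
  case True
  then show ?thesis using assms by simp
next
  case False
  have "\<And>x. real N \<le> x \<Longrightarrow> x \<le> real N + 1 \<Longrightarrow>
      ((\<lambda>z. z powr \<theta>) has_real_derivative \<theta> * x powr (\<theta> - 1)) (at x)"
    using False by (intro has_real_derivative_powr) auto
  then obtain z where z: "real N < z" "z < real N + 1"
    and mvt: "(real N + 1) powr \<theta> - real N powr \<theta> = (real N + 1 - real N) * (\<theta> * z powr (\<theta> - 1))"
    using MVT2[of "real N" "real N + 1" "\<lambda>z. z powr \<theta>" "\<lambda>x. \<theta> * x powr (\<theta> - 1)"] by auto
  have "(real N + 1) powr (\<theta> - 1) \<le> z powr (\<theta> - 1)"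
    using z assms by (intro powr_mono2') auto
  then have "\<theta> * (real N + 1) powr (\<theta> - 1) \<le> \<theta> * z powr (\<theta> - 1)"
    using assms by (intro mult_left_mono) auto
  then show ?thesis using mvt by simp
qed

lemma sum_powr_le:
  fixes \<theta> :: real
  assumes "0 < \<theta>" "\<theta> \<le> 1"
  shows "(\<Sum>n\<in>{1..N}. real n powr (\<theta> - 1)) \<le> real N powr \<theta> / \<theta>"
proof (induction N)
  case (Suc N)
  have "(\<Sum>n\<in>{1..Suc N}. real n powr (\<theta> - 1)) \<le> real N powr \<theta> / \<theta> + (real N + 1) powr (\<theta> - 1)"
    using Suc by (simp add: add.commute)
  also have "\<dots> = (real N powr \<theta> + \<theta> * (real N + 1) powr (\<theta> - 1)) / \<theta>"
    using assms by (simp add: field_simps)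
  also have "\<dots> \<le> real (Suc N) powr \<theta> / \<theta>"
    using powr_concave_step[OF assms, of N] assms by (simp add: divide_right_mono add.commute)
  finally show ?case .
qed simp

lemma sum_incl_prob_le:
  assumes "s \<ge> 1"
  shows "(\<Sum>n\<in>{1..N}. incl_prob s n) \<le> real N powr (1 / real s)"
proof -
  have "(\<Sum>n\<in>{1..N}. incl_prob s n) = (1 / real s) * (\<Sum>n\<in>{1..N}. real n powr (1 / real s - 1))"
    unfolding incl_prob_def by (simp add: sum_distrib_left)
  also have "\<dots> \<le> (1 / real s) * (real N powr (1 / real s) / (1 / real s))"
    using assms by (intro mult_left_mono sum_powr_le) auto
  finally show ?thesis using assms by simp
qed

lemma incl_prob_le_powr:
  assumes "s \<ge> 1" "0 < j" "real j \<le> real s * real m"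
  shows "incl_prob s m \<le> real j powr (-1 + 1 / real s)"
proof -
  let ?e = "-1 + 1 / real s"
  have e: "?e \<le> 0" using assms(1) by (simp add: field_simps)
  have "m > 0" using assms by (auto intro: ccontr)
  have s_powr: "real s powr (1 / real s) = real s powr ?e * real s"
  proof -
    have "1 / real s = ?e + 1" by simp
    then show ?thesis using assms(1) by (simp only: powr_add) simp
  qed
  have "incl_prob s m = real m powr ?e / real s"
    using \<open>m > 0\<close> unfolding incl_prob_def by simp
  also have "\<dots> \<le> (real j / real s) powr ?e / real s"
    using assms by (intro divide_right_mono powr_mono2'[OF e]) (auto simp: field_simps)
  also have "\<dots> = real j powr ?e / real s powr (1 / real s)"
    unfolding s_powr by (simp add: powr_divide)
  also have "\<dots> \<le> real j powr ?e / 1"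
    using assms(1) by (intro divide_left_mono ge_one_powr_ge_zero) auto
  finally show ?thesis by simp
qed

lemma sum_prod_card_eq_le:
  fixes p :: "'a \<Rightarrow> real"
  assumes X: "finite X" and p: "\<And>n. 0 \<le> p n"
  shows "(\<Sum>w\<in>{w. w \<subseteq> X \<and> card w = k}. \<Prod>n\<in>w. p n) \<le> (\<Sum>n\<in>X. p n) ^ k"
proof -
  \<comment> \<open>every \<open>k\<close>-subset is the image of an injective \<open>k\<close>-tuple; expand \<open>(\<Sum>X p)\<^sup>k\<close> over all tuples\<close>
  define G where "G = {g \<in> {..<k} \<rightarrow>\<^sub>E X. inj_on g {..<k}}"
  have finG: "finite G"
    unfolding G_def using X by (intro finite_subset[OF _ finite_PiE[of "{..<k}" "\<lambda>_. X"]]) auto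
  have "{w. w \<subseteq> X \<and> card w = k} \<subseteq> (\<lambda>g. g ` {..<k}) ` G"
  proof
    fix w assume w: "w \<in> {w. w \<subseteq> X \<and> card w = k}"
    then have "finite w" using X finite_subset by auto
    then obtain h where "bij_betw h {..<k} w"
      using w ex_bij_betw_nat_finite[of w] by (auto simp: atLeast0LessThan)
    then have "restrict h {..<k} \<in> G" "w = restrict h {..<k} ` {..<k}"
      unfolding G_def using w by (auto simp: bij_betw_def inj_on_def)
    then show "w \<in> (\<lambda>g. g ` {..<k}) ` G" by blast
  qed
  then have "(\<Sum>w\<in>{w. w \<subseteq> X \<and> card w = k}. \<Prod>n\<in>w. p n) \<le> (\<Sum>w\<in>(\<lambda>g. g ` {..<k}) ` G. \<Prod>n\<in>w. p n)"
    by (intro sum_mono2 finite_imageI finG prod_nonneg p)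
  also have "\<dots> \<le> (\<Sum>g\<in>G. \<Prod>n\<in>g ` {..<k}. p n)"
    using sum_image_le[OF finG, of "\<lambda>w. \<Prod>n\<in>w. p n" "\<lambda>g. g ` {..<k}"] p
    by (simp add: prod_nonneg comp_def)
  also have "\<dots> = (\<Sum>g\<in>G. \<Prod>i<k. p (g i))"
    by (intro sum.cong refl) (simp add: G_def prod.reindex)
  also have "\<dots> \<le> (\<Sum>g\<in>{..<k} \<rightarrow>\<^sub>E X. \<Prod>i<k. p (g i))"
    using X by (intro sum_mono2 finite_PiE) (auto simp: G_def intro: prod_nonneg p)
  also have "\<dots> = (\<Sum>n\<in>X. p n) ^ k"
    using X by (subst prod_sum_PiE[symmetric]) auto
  finally show ?thesis .
qed

lemma sum_prod_card_le_le:
  fixes p :: "'a \<Rightarrow> real"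
  assumes X: "finite X" and p: "\<And>n. 0 \<le> p n" and U: "(\<Sum>n\<in>X. p n) \<le> U" "1 \<le> U"
  shows "(\<Sum>w\<in>{w. w \<subseteq> X \<and> card w \<le> r}. \<Prod>n\<in>w. p n) \<le> real (r + 1) * U ^ r"
proof -
  have "{w. w \<subseteq> X \<and> card w \<le> r} = (\<Union>k\<in>{..r}. {w. w \<subseteq> X \<and> card w = k})" by auto
  then have "(\<Sum>w\<in>{w. w \<subseteq> X \<and> card w \<le> r}. \<Prod>n\<in>w. p n) =
      (\<Sum>k\<in>{..r}. \<Sum>w\<in>{w. w \<subseteq> X \<and> card w = k}. \<Prod>n\<in>w. p n)"
    using X by (simp only:) (rule sum.UNION_disjoint, auto intro: finite_subset[of _ "Pow X"])
  also have "\<dots> \<le> (\<Sum>k\<in>{..r}. U ^ r)"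
  proof (intro sum_mono)
    fix k assume "k \<in> {..r}"
    have "(\<Sum>w\<in>{w. w \<subseteq> X \<and> card w = k}. \<Prod>n\<in>w. p n) \<le> (\<Sum>n\<in>X. p n) ^ k"
      by (rule sum_prod_card_eq_le[OF X p])
    also have "\<dots> \<le> U ^ k" using U p by (intro power_mono sum_nonneg) auto
    also have "\<dots> \<le> U ^ r" using U \<open>k \<in> {..r}\<close> by (intro power_increasing) auto
    finally show "(\<Sum>w\<in>{w. w \<subseteq> X \<and> card w = k}. \<Prod>n\<in>w. p n) \<le> U ^ r" .
  qed
  finally show ?thesis by simp
qed

lemma
  fixes t c :: nat and a b :: real
  assumes "t \<ge> 1"
  shows finite_affine_preimage: "finite {m. real (t * m + c) \<in> {a..b}}"
    and card_affine_preimage_le: "card {m. real (t * m + c) \<in> {a..b}} \<le> nat \<lfloor>b - a\<rfloor> + 1"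
proof -
  let ?A = "{m. real (t * m + c) \<in> {a..b}}"
  have inj: "inj_on (\<lambda>m. t * m + c) ?A" using assms by (auto simp: inj_on_def)
  have img: "(\<lambda>m. t * m + c) ` ?A \<subseteq> {nat \<lceil>a\<rceil> .. nat \<lceil>a\<rceil> + nat \<lfloor>b - a\<rfloor>}"
  proof
    fix n assume "n \<in> (\<lambda>m. t * m + c) ` ?A"
    then have n: "a \<le> real n" "real n \<le> b" by auto
    then have "real n - a \<le> b - a" by simp
    moreover have "real n - a < real n - real_of_int \<lceil>a\<rceil> + 1" by linarith
    ultimately show "n \<in> {nat \<lceil>a\<rceil> .. nat \<lceil>a\<rceil> + nat \<lfloor>b - a\<rfloor>}"
      using n by (auto simp: le_nat_iff nat_le_iff intro!: ceiling_le) linarith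
  qed
  show "finite ?A"
    using inj img by (metis finite_atLeastAtMost finite_image_iff finite_subset)
  have "card ?A = card ((\<lambda>m. t * m + c) ` ?A)" using inj by (simp add: card_image)
  also have "\<dots> \<le> card {nat \<lceil>a\<rceil> .. nat \<lceil>a\<rceil> + nat \<lfloor>b - a\<rfloor>}" by (intro card_mono img) simp
  finally show "card ?A \<le> nat \<lfloor>b - a\<rfloor> + 1" by simp
qed

lemma sum_prod_le_sum_insert:
  fixes p :: "'a \<Rightarrow> real"
  assumes W: "finite W" and M: "\<And>w. w \<in> W \<Longrightarrow> finite w \<and> finite (M w) \<and> M w \<inter> w = {}"
    and S: "S \<subseteq> (\<lambda>(w, m). insert m w) ` Sigma W M" and p: "\<And>n. 0 \<le> p n"
  shows "(\<Sum>\<omega>\<in>S. \<Prod>n\<in>\<omega>. p n) \<le> (\<Sum>w\<in>W. (\<Prod>n\<in>w. p n) * (\<Sum>m\<in>M w. p m))"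
proof -
  have fin: "finite (Sigma W M)" using W M by auto
  have "(\<Sum>\<omega>\<in>S. \<Prod>n\<in>\<omega>. p n) \<le> (\<Sum>\<omega>\<in>(\<lambda>(w, m). insert m w) ` Sigma W M. \<Prod>n\<in>\<omega>. p n)"
    using fin S p by (intro sum_mono2 finite_imageI prod_nonneg) auto
  also have "\<dots> \<le> (\<Sum>(w, m)\<in>Sigma W M. \<Prod>n\<in>insert m w. p n)"
    using sum_image_le[OF fin, of "\<lambda>\<omega>. \<Prod>n\<in>\<omega>. p n" "\<lambda>(w, m). insert m w"] p
    by (simp add: prod_nonneg comp_def case_prod_unfold)
  also have "\<dots> = (\<Sum>w\<in>W. \<Sum>m\<in>M w. \<Prod>n\<in>insert m w. p n)"
    using W M by (subst sum.Sigma) auto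
  also have "\<dots> = (\<Sum>w\<in>W. \<Sum>m\<in>M w. (\<Prod>n\<in>w. p n) * p m)"
  proof (intro sum.cong refl)
    fix w m assume "w \<in> W" "m \<in> M w"
    then have "finite w" "m \<notin> w" using M by auto
    then show "(\<Prod>n\<in>insert m w. p n) = (\<Prod>n\<in>w. p n) * p m" by simp
  qed
  also have "\<dots> = (\<Sum>w\<in>W. (\<Prod>n\<in>w. p n) * (\<Sum>m\<in>M w. p m))"
    by (simp add: sum_distrib_left)
  finally show ?thesis .
qed

text \<open>The candidates for the largest element \<open>m\<close> of a set \<open>insert m w \<in> Omega s (Ik \<alpha> j)\<close>.\<close>
definition top_elements :: "nat \<Rightarrow> real \<Rightarrow> nat \<Rightarrow> nat set \<Rightarrow> nat set" where
  "top_elements s \<alpha> j w = {m. real j \<le> real s * real m \<and> m \<notin> w \<and>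
     (\<exists>t\<in>{1..s}. \<exists>a\<in>w \<rightarrow>\<^sub>E {1..s}. real (t * m + (\<Sum>x\<in>w. a x * x)) \<in> Ik \<alpha> j)}"

lemma top_elements_subset:
  "top_elements s \<alpha> j w \<subseteq>
    (\<Union>t\<in>{1..s}. \<Union>a\<in>w \<rightarrow>\<^sub>E {1..s}. {m. real (t * m + (\<Sum>x\<in>w. a x * x)) \<in> Ik \<alpha> j})"
  unfolding top_elements_def by blast

lemma finite_top_elements:
  assumes "finite w"
  shows "finite (top_elements s \<alpha> j w)"
  using assms unfolding Ik_def
  by (intro finite_subset[OF top_elements_subset[unfolded Ik_def]] finite_UN_I finite_PiE
      finite_affine_preimage) auto

lemma card_top_elements_le:
  assumes "finite w"
  shows "card (top_elements s \<alpha> j w) \<le> s ^ Suc (card w) * (nat \<lfloor>\<alpha> * ln (real j)\<rfloor> + 1)"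
proof -
  let ?B = "\<lambda>t a. {m. real (t * m + (\<Sum>x\<in>w. a x * x)) \<in> Ik \<alpha> j}"
  let ?L = "nat \<lfloor>\<alpha> * ln (real j)\<rfloor> + 1"
  have card_B: "card (?B t a) \<le> ?L" if "t \<in> {1..s}" for t a
    using that card_affine_preimage_le[of t "\<Sum>x\<in>w. a x * x" "real j" "real j + \<alpha> * ln (real j)"]
    unfolding Ik_def by simp
  have "card (top_elements s \<alpha> j w) \<le> card (\<Union>t\<in>{1..s}. \<Union>a\<in>w \<rightarrow>\<^sub>E {1..s}. ?B t a)"
    using assms unfolding Ik_def
    by (intro card_mono top_elements_subset[unfolded Ik_def] finite_UN_I finite_PiE
        finite_affine_preimage) auto
  also have "\<dots> \<le> (\<Sum>t\<in>{1..s}. \<Sum>a\<in>w \<rightarrow>\<^sub>E {1..s}. card (?B t a))"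
    using assms by (intro order.trans[OF card_UN_le] sum_mono card_UN_le finite_PiE) auto
  also have "\<dots> \<le> (\<Sum>t\<in>{1..s}. \<Sum>a\<in>w \<rightarrow>\<^sub>E {1..s}. ?L)"
    using card_B by (intro sum_mono) auto
  also have "\<dots> = s ^ Suc (card w) * ?L"
    using assms by (simp add: card_PiE algebra_simps)
  finally show ?thesis .
qed

lemma sum_incl_prob_top_elements_le:
  assumes "s \<ge> 1" "j \<ge> 1" "0 \<le> \<alpha> * ln (real j)" "finite w" "card w < s"
  shows "(\<Sum>m\<in>top_elements s \<alpha> j w. incl_prob s m)
    \<le> real s ^ s * (\<alpha> * ln (real j) + 1) * real j powr (-1 + 1 / real s)"
proof -
  let ?L = "\<alpha> * ln (real j)"
  have "(\<Sum>m\<in>top_elements s \<alpha> j w. incl_prob s m)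
      \<le> real (card (top_elements s \<alpha> j w)) * real j powr (-1 + 1 / real s)"
    using assms(1,2) by (intro sum_bounded_above incl_prob_le_powr) (auto simp: top_elements_def)
  also have "\<dots> \<le> real (s ^ Suc (card w) * (nat \<lfloor>?L\<rfloor> + 1)) * real j powr (-1 + 1 / real s)"
    using card_top_elements_le[OF assms(4), of s \<alpha> j] by (intro mult_right_mono) (simp_all only: of_nat_le_iff powr_ge_zero)
  also have "\<dots> \<le> real s ^ s * (?L + 1) * real j powr (-1 + 1 / real s)"
  proof (intro mult_right_mono)
    have "real s ^ Suc (card w) \<le> real s ^ s"
      using assms(1,5) by (intro power_increasing) auto
    moreover have "real (nat \<lfloor>?L\<rfloor>) \<le> ?L" using assms(3) by linarith
    ultimately have "real s ^ Suc (card w) * (real (nat \<lfloor>?L\<rfloor>) + 1) \<le> real s ^ s * (?L + 1)"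
      by (intro mult_mono) auto
    then show "real (s ^ Suc (card w) * (nat \<lfloor>?L\<rfloor> + 1)) \<le> real s ^ s * (?L + 1)"
      by (simp only: of_nat_mult of_nat_power of_nat_add of_nat_1)
  qed simp
  finally show ?thesis .
qed

lemma Omega_Ik_insert_top_element:
  assumes "s \<ge> 1" "\<omega> \<in> Omega s (Ik \<alpha> j)" "card \<omega> < s"
  obtains w m where "\<omega> = insert m w" "w \<subseteq> {1..nat \<lfloor>real j + \<alpha> * ln (real j)\<rfloor>}"
    "card w \<le> s - 2" "m \<in> top_elements s \<alpha> j w"
proof -
  obtain a where fin: "finite \<omega>" and a: "\<forall>x\<in>\<omega>. 1 \<le> a x" and a_sum: "(\<Sum>x\<in>\<omega>. a x) = s"
    and in_Ik: "real (\<Sum>x\<in>\<omega>. a x * x) \<in> Ik \<alpha> j"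
    using OmegaE[OF assms(2)] by metis
  have "\<omega> \<noteq> {}" using a_sum assms(1) by auto
  define m where "m = Max \<omega>"
  define w where "w = \<omega> - {m}"
  have m: "m \<in> \<omega>" "\<forall>x\<in>\<omega>. x \<le> m" using fin \<open>\<omega> \<noteq> {}\<close> by (simp_all add: m_def)
  have a_le: "\<forall>x\<in>\<omega>. a x \<le> s" using a_sum fin by (metis member_le_sum zero_le)
  have split: "(\<Sum>x\<in>\<omega>. a x * x) = a m * m + (\<Sum>x\<in>w. restrict a w x * x)"
    unfolding w_def using sum.remove[OF fin m(1), of "\<lambda>x. a x * x"] by simp
  have "(\<Sum>x\<in>\<omega>. a x * x) \<le> (\<Sum>x\<in>\<omega>. a x * m)" using m(2) by (intro sum_mono) auto
  also have "\<dots> = s * m" using a_sum by (simp add: sum_distrib_right[symmetric])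
  finally have "real j \<le> real s * real m"
    using in_Ik unfolding Ik_def by (simp del: of_nat_sum) (smt (verit) of_nat_le_iff of_nat_mult)
  then have "m \<in> top_elements s \<alpha> j w"
    unfolding top_elements_def using a a_le m(1) split in_Ik
    by (intro CollectI conjI bexI[of _ "a m"] bexI[of _ "restrict a w"]) (auto simp: w_def)
  moreover have "\<omega> = insert m w" using m(1) by (auto simp: w_def)
  moreover have "w \<subseteq> {1..nat \<lfloor>real j + \<alpha> * ln (real j)\<rfloor>}"
    using Omega_subset_atLeastAtMost[OF Ik_subset_atMost assms(2)] by (auto simp: w_def)
  moreover have "card w \<le> s - 2" using assms(3) fin m(1) by (simp add: w_def)
  ultimately show ?thesis using that by blast
qed

lemma one_le_ln: "3 \<le> x \<Longrightarrow> 1 \<le> ln (x :: real)"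
  using exp_le by (subst ln_ge_iff) auto

lemma sum_prod_incl_prob_small_subsets_le:
  assumes "s \<ge> 2" "1 \<le> N" "real N \<le> B"
  shows "(\<Sum>w\<in>{w. w \<subseteq> {1..N} \<and> card w \<le> s - 2}. \<Prod>n\<in>w. incl_prob s n)
    \<le> real (s - 1) * B powr (real (s - 2) / real s)"
proof -
  define U where "U = real N powr (1 / real s)"
  have "1 \<le> U" using assms unfolding U_def by (intro ge_one_powr_ge_zero) auto
  then have "(\<Sum>w\<in>{w. w \<subseteq> {1..N} \<and> card w \<le> s - 2}. \<Prod>n\<in>w. incl_prob s n)
      \<le> real (s - 2 + 1) * U ^ (s - 2)"
    using sum_incl_prob_le[of s N] assms(1)
    by (intro sum_prod_card_le_le incl_prob_nonneg) (auto simp: U_def)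
  also have "\<dots> = real (s - 1) * real N powr (real (s - 2) / real s)"
  proof -
    have "U ^ (s - 2) = U powr real (s - 2)" using \<open>1 \<le> U\<close> by (simp add: powr_realpow)
    also have "\<dots> = real N powr (real (s - 2) / real s)" unfolding U_def by (simp add: powr_powr)
    finally show ?thesis using assms(1) by (simp add: Suc_diff_Suc numeral_2_eq_2)
  qed
  also have "\<dots> \<le> real (s - 1) * B powr (real (s - 2) / real s)"
    using assms by (intro mult_left_mono powr_mono2) auto
  finally show ?thesis .
qed

lemma sum_prod_small_Omega_Ik_le_top_elements:
  fixes p :: "nat \<Rightarrow> real" and \<alpha> :: real and j :: nat
  assumes "s \<ge> 1" "\<And>n. 0 \<le> p n"
  defines "W \<equiv> {w. w \<subseteq> {1..nat \<lfloor>real j + \<alpha> * ln (real j)\<rfloor>} \<and> card w \<le> s - 2}"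
  shows "(\<Sum>\<omega>\<in>Omega s (Ik \<alpha> j) \<inter> {\<omega>. card \<omega> < s}. \<Prod>n\<in>\<omega>. p n)
    \<le> (\<Sum>w\<in>W. (\<Prod>n\<in>w. p n) * (\<Sum>m\<in>top_elements s \<alpha> j w. p m))"
proof (rule sum_prod_le_sum_insert[OF _ _ _ assms(2)])
  show "finite W" unfolding W_def by (auto intro: finite_subset[of _ "Pow {1..nat \<lfloor>real j + \<alpha> * ln (real j)\<rfloor>}"])
  show "finite w \<and> finite (top_elements s \<alpha> j w) \<and> top_elements s \<alpha> j w \<inter> w = {}"
    if "w \<in> W" for w
  proof -
    have "finite w" using that unfolding W_def by (auto intro: finite_subset)
    then show ?thesis using finite_top_elements by (auto simp: top_elements_def)
  qed
  show "Omega s (Ik \<alpha> j) \<inter> {\<omega>. card \<omega> < s} \<subseteq> (\<lambda>(w, m). insert m w) ` Sigma W (top_elements s \<alpha> j)"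
  proof
    fix \<omega> assume \<omega>: "\<omega> \<in> Omega s (Ik \<alpha> j) \<inter> {\<omega>. card \<omega> < s}"
    obtain w m where "\<omega> = insert m w" "w \<in> W" "m \<in> top_elements s \<alpha> j w"
      unfolding W_def by (rule Omega_Ik_insert_top_element[of s \<omega> \<alpha> j]) (use assms(1) \<omega> in auto)
    then show "\<omega> \<in> (\<lambda>(w, m). insert m w) ` Sigma W (top_elements s \<alpha> j)" by force
  qed
qed

lemma powr_mult_le_mult_powr:
  fixes x y c :: real
  assumes "1 \<le> x" "0 \<le> y" "0 \<le> c" "c \<le> 1"
  shows "(x * y) powr c \<le> x * y powr c"
proof -
  have "x powr c \<le> x powr 1" using assms by (intro powr_mono) auto
  then show ?thesis using assms by (simp add: powr_mult mult_right_mono)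
qed

lemma sum_prod_small_Omega_Ik_le:
  assumes s: "s \<ge> 2" and \<alpha>: "\<alpha> > 0" and j: "j \<ge> 3"
  shows "(\<Sum>\<omega>\<in>Omega s (Ik \<alpha> j) \<inter> {\<omega>. card \<omega> < s}. \<Prod>n\<in>\<omega>. incl_prob s n)
     \<le> real s ^ s * (\<alpha> + 1) ^ 2 * real (s - 1) * (real j powr (- 1 / real s) * ln (real j))"
proof -
  let ?p = "incl_prob s" and ?L = "\<alpha> * ln (real j)"
  define N where "N = nat \<lfloor>real j + ?L\<rfloor>"
  define W where "W = {w. w \<subseteq> {1..N} \<and> card w \<le> s - 2}"
  define c where "c = real (s - 2) / real s"
  define e where "e = -1 + 1 / real s"
  have ln_j: "1 \<le> ln (real j)" "ln (real j) \<le> real j"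
    using j one_le_ln[of "real j"] ln_le_minus_one[of "real j"] by auto
  have L: "0 \<le> ?L" "?L \<le> \<alpha> * real j"
    using ln_j \<alpha> by (auto intro: mult_left_mono)
  have N: "1 \<le> N" "real N \<le> (1 + \<alpha>) * real j"
  proof -
    show "1 \<le> N" unfolding N_def using L j by (intro le_nat_floor) auto
    have "real N \<le> real j + ?L" unfolding N_def using L by linarith
    then show "real N \<le> (1 + \<alpha>) * real j" using L by (simp add: algebra_simps)
  qed
  have W: "\<And>w. w \<in> W \<Longrightarrow> finite w \<and> card w < s"
    unfolding W_def using s by (auto intro: finite_subset)
  have "(\<Sum>\<omega>\<in>Omega s (Ik \<alpha> j) \<inter> {\<omega>. card \<omega> < s}. \<Prod>n\<in>\<omega>. ?p n)
      \<le> (\<Sum>w\<in>W. (\<Prod>n\<in>w. ?p n) * (\<Sum>m\<in>top_elements s \<alpha> j w. ?p m))"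
    unfolding W_def N_def using s by (intro sum_prod_small_Omega_Ik_le_top_elements incl_prob_nonneg) auto
  also have "\<dots> \<le> (\<Sum>w\<in>W. (\<Prod>n\<in>w. ?p n) * (real s ^ s * (?L + 1) * real j powr e))"
    unfolding e_def using W s j \<alpha> ln_j
    by (intro sum_mono mult_left_mono sum_incl_prob_top_elements_le prod_nonneg incl_prob_nonneg) auto
  also have "\<dots> = (\<Sum>w\<in>W. \<Prod>n\<in>w. ?p n) * (real s ^ s * (?L + 1) * real j powr e)"
    by (simp add: sum_distrib_right)
  also have "\<dots> \<le> (real (s - 1) * ((1 + \<alpha>) * real j) powr c) * (real s ^ s * ((\<alpha> + 1) * ln (real j)) * real j powr e)"
    unfolding W_def c_def using sum_prod_incl_prob_small_subsets_le[OF s N] ln_j \<alpha>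
    by (intro mult_mono) (auto simp: algebra_simps intro!: sum_nonneg prod_nonneg incl_prob_nonneg)
  also have "\<dots> \<le> (real (s - 1) * ((1 + \<alpha>) * real j powr c)) * (real s ^ s * ((\<alpha> + 1) * ln (real j)) * real j powr e)"
    using powr_mult_le_mult_powr[of "1 + \<alpha>" "real j" c] \<alpha> ln_j s unfolding c_def
    by (intro mult_right_mono mult_left_mono) auto
  also have "\<dots> = real s ^ s * (\<alpha> + 1) ^ 2 * real (s - 1) * ((real j powr c * real j powr e) * ln (real j))"
    by (simp add: algebra_simps power2_eq_square)
  also have "real j powr c * real j powr e = real j powr (- 1 / real s)"
    unfolding c_def e_def using s by (simp add: powr_add[symmetric] of_nat_diff field_simps)
  finally show ?thesis .
qed

section \<open>Comparing the products with \<open>P(F\<^sub>i) P(F\<^sub>j)\<close>\<close>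

lemma exp_neg_two_le_one_minus:
  fixes t :: real
  assumes "0 \<le> t" "t \<le> 1 / 2"
  shows "exp (-2 * t) \<le> 1 - t"
proof -
  have "1 + 2 * t \<le> exp (2 * t)" using exp_ge_add_one_self[of "2 * t"] by simp
  then have "exp (-2 * t) \<le> 1 / (1 + 2 * t)" using assms by (simp add: exp_minus field_simps)
  also have "\<dots> \<le> 1 - t"
  proof -
    have "t * (2 * t) \<le> t * 1" using assms by (intro mult_left_mono) auto
    then show ?thesis using assms by (simp add: field_simps)
  qed
  finally show ?thesis .
qed

lemma exp_mult_le_one_plus:
  fixes a t T :: real
  assumes "0 \<le> a" "0 \<le> t" "t \<le> T"
  shows "exp (a * t) \<le> 1 + a * exp (a * T) * t"
proof -
  have "(1 - a * t) * exp (a * t) \<le> exp (- (a * t)) * exp (a * t)"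
    using exp_ge_add_one_self[of "- (a * t)"] by (intro mult_right_mono) auto
  then have "exp (a * t) \<le> 1 + a * t * exp (a * t)" by (simp add: exp_minus algebra_simps)
  also have "\<dots> \<le> 1 + a * t * exp (a * T)"
    using assms by (intro add_left_mono mult_left_mono) (auto intro: mult_left_mono)
  also have "\<dots> = 1 + a * exp (a * T) * t" by simp
  finally show ?thesis .
qed

lemma powr_neg_inverse_mult_ln_le:
  assumes "s \<ge> 1" "j > 0"
  shows "real j powr (- 1 / real s) * ln (real j) \<le> real s"
proof -
  have "ln (real j) = real s * ln (real j powr (1 / real s))"
    using assms by (simp add: ln_powr)
  also have "\<dots> \<le> real s * real j powr (1 / real s)"
    using assms by (intro mult_left_mono less_imp_le[OF ln_less_self]) auto
  finally have "real j powr (- 1 / real s) * ln (real j)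
      \<le> real j powr (- 1 / real s) * (real s * real j powr (1 / real s))"
    by (intro mult_left_mono) auto
  also have "\<dots> = real s"
    using assms by (simp add: mult.left_commute powr_add[symmetric])
  finally show ?thesis .
qed

lemma prod_union_le_divide:
  fixes q :: "'a \<Rightarrow> real"
  assumes "finite A" "finite B" "\<And>x. 0 \<le> q x"
    and "(\<Prod>x\<in>A. q x) \<le> a" "(\<Prod>x\<in>B. q x) \<le> b" "0 < c" "c \<le> (\<Prod>x\<in>A \<inter> B. q x)"
  shows "(\<Prod>x\<in>A \<union> B. q x) \<le> a * b / c"
proof -
  have "0 \<le> a" by (rule order.trans[OF prod_nonneg assms(4)]) (use assms(3) in auto)
  have "(\<Prod>x\<in>A \<union> B. q x) * (\<Prod>x\<in>A \<inter> B. q x) = (\<Prod>x\<in>A. q x) * (\<Prod>x\<in>B. q x)"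
    using assms(1,2) by (rule prod.union_inter)
  also have "\<dots> \<le> a * b"
    using assms(3-5) \<open>0 \<le> a\<close> by (intro mult_mono prod_nonneg) auto
  finally have "(\<Prod>x\<in>A \<union> B. q x) \<le> a * b / (\<Prod>x\<in>A \<inter> B. q x)"
    using assms(6,7) by (simp add: field_simps)
  also have "\<dots> \<le> a * b / c"
  proof (intro divide_left_mono)
    have "0 \<le> b" by (rule order.trans[OF prod_nonneg assms(5)]) (use assms(3) in auto)
    then show "0 \<le> a * b" using \<open>0 \<le> a\<close> by simp
  qed (use assms(6,7) in auto)
  finally show ?thesis .
qed

lemma prod_incl_prob_Omega_le_half:
  assumes "s \<ge> 2" "\<omega> \<in> Omega s I"
  shows "(\<Prod>n\<in>\<omega>. incl_prob s n) \<le> 1 / 2"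
proof -
  obtain a where "finite \<omega>" "(\<Sum>x\<in>\<omega>. a x) = s" using OmegaE[OF assms(2)] by metis
  moreover from this have "\<omega> \<noteq> {}" using assms(1) by auto
  then obtain x where "x \<in> \<omega>" by blast
  ultimately have "(\<Prod>n\<in>\<omega>. incl_prob s n) = incl_prob s x * (\<Prod>n\<in>\<omega> - {x}. incl_prob s n)"
    by (simp add: prod.remove)
  also have "\<dots> \<le> 1 / real s * 1"
    by (intro mult_mono incl_prob_le_inverse prod_le_1 prod_nonneg) (auto simp: incl_prob_nonneg incl_prob_le_one)
  also have "\<dots> \<le> 1 / 2" using assms(1) by simp
  finally show ?thesis .
qed

lemma exp_sum_le_prod_measure_Ec:
  assumes "s \<ge> 2" "finite W" "W \<subseteq> Omega s I"
  shows "exp (-2 * (\<Sum>\<omega>\<in>W. \<Prod>n\<in>\<omega>. incl_prob s n)) \<le> (\<Prod>\<omega>\<in>W. measure (RS s) (Ec s \<omega>))"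
proof -
  have "exp (-2 * (\<Sum>\<omega>\<in>W. \<Prod>n\<in>\<omega>. incl_prob s n)) = (\<Prod>\<omega>\<in>W. exp (-2 * (\<Prod>n\<in>\<omega>. incl_prob s n)))"
    using assms(2) by (simp add: exp_sum sum_distrib_left)
  also have "\<dots> \<le> (\<Prod>\<omega>\<in>W. measure (RS s) (Ec s \<omega>))"
  proof (intro prod_mono conjI)
    fix \<omega> assume "\<omega> \<in> W"
    then have \<omega>: "\<omega> \<in> Omega s I" using assms(3) by blast
    have "measure (RS s) (Ec s \<omega>) = 1 - (\<Prod>n\<in>\<omega>. incl_prob s n)"
      using \<omega> by (intro measure_Ec) (auto simp: Omega_def)
    moreover have "0 \<le> (\<Prod>n\<in>\<omega>. incl_prob s n)" by (intro prod_nonneg) (simp add: incl_prob_nonneg)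
    ultimately show "exp (-2 * (\<Prod>n\<in>\<omega>. incl_prob s n)) \<le> measure (RS s) (Ec s \<omega>)"
      using prod_incl_prob_Omega_le_half[OF assms(1) \<omega>] exp_neg_two_le_one_minus by simp
  qed simp
  finally show ?thesis .
qed

lemma prod_measure_Ec_Omega_le_Fk:
  "(\<Prod>\<omega>\<in>Omega s (Ik \<alpha> k). measure (RS s) (Ec s \<omega>)) \<le> measure (RS s) (Fk s \<alpha> k)"
  unfolding Fk_eq_Omega
  by (intro prod_measure_Ec_le finite_Omega[OF Ik_subset_atMost]) (auto simp: Omega_def)

lemma exp_le_prod_measure_Ec_Omega_Int:
  assumes s: "s \<ge> 2" and \<alpha>: "\<alpha> > 0" and "2 \<le> i" "i < j" and disj: "Ik \<alpha> i \<inter> Ik \<alpha> j = {}"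
  shows "exp (-2 * (real s ^ s * (\<alpha> + 1) ^ 2 * real (s - 1) * (real j powr (- 1 / real s) * ln (real j))))
    \<le> (\<Prod>\<omega>\<in>Omega s (Ik \<alpha> i) \<inter> Omega s (Ik \<alpha> j). measure (RS s) (Ec s \<omega>))"
proof -
  let ?\<pi> = "\<lambda>\<omega>. \<Prod>n\<in>\<omega>. incl_prob s n"
  let ?W = "Omega s (Ik \<alpha> i) \<inter> Omega s (Ik \<alpha> j)"
  have fin: "finite (Omega s (Ik \<alpha> j))" by (intro finite_Omega[OF Ik_subset_atMost])
  have "?W \<subseteq> Omega s (Ik \<alpha> j) \<inter> {\<omega>. card \<omega> < s}"
    using card_less_of_Omega_disjoint[OF _ _ disj] by blast
  then have "(\<Sum>\<omega>\<in>?W. ?\<pi> \<omega>) \<le> (\<Sum>\<omega>\<in>Omega s (Ik \<alpha> j) \<inter> {\<omega>. card \<omega> < s}. ?\<pi> \<omega>)"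
    using fin by (intro sum_mono2 prod_nonneg) (auto simp: incl_prob_nonneg)
  also have "\<dots> \<le> real s ^ s * (\<alpha> + 1) ^ 2 * real (s - 1) * (real j powr (- 1 / real s) * ln (real j))"
    using sum_prod_small_Omega_Ik_le[OF s \<alpha>, of j] assms(3,4) by simp
  finally have "exp (-2 * (real s ^ s * (\<alpha> + 1) ^ 2 * real (s - 1) * (real j powr (- 1 / real s) * ln (real j))))
      \<le> exp (-2 * (\<Sum>\<omega>\<in>?W. ?\<pi> \<omega>))" by simp
  also have "\<dots> \<le> (\<Prod>\<omega>\<in>?W. measure (RS s) (Ec s \<omega>))"
    using fin by (intro exp_sum_le_prod_measure_Ec[OF s, of _ "Ik \<alpha> j"]) auto
  finally show ?thesis .
qed

lemma prod_measure_Ec_Omega_union_le: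
  assumes s: "s \<ge> 2" and \<alpha>: "\<alpha> > 0" and ij: "2 \<le> i" "i < j" and disj: "Ik \<alpha> i \<inter> Ik \<alpha> j = {}"
  defines "D \<equiv> real s ^ s * (\<alpha> + 1) ^ 2 * real (s - 1)"
  shows "(\<Prod>\<omega>\<in>Omega s (Ik \<alpha> i) \<union> Omega s (Ik \<alpha> j). measure (RS s) (Ec s \<omega>))
    \<le> measure (RS s) (Fk s \<alpha> i) * measure (RS s) (Fk s \<alpha> j)
       * (1 + 2 * D * exp (2 * D * real s) * real j powr (- 1 / real s) * ln (real j))"
proof -
  define t where "t = real j powr (- 1 / real s) * ln (real j)"
  let ?PF = "measure (RS s) (Fk s \<alpha> i) * measure (RS s) (Fk s \<alpha> j)"
  have t: "0 \<le> t" "t \<le> real s"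
    unfolding t_def using ij s one_le_ln[of "real j"] powr_neg_inverse_mult_ln_le[of s j] by auto
  have "(\<Prod>\<omega>\<in>Omega s (Ik \<alpha> i) \<union> Omega s (Ik \<alpha> j). measure (RS s) (Ec s \<omega>))
      \<le> ?PF / exp (-2 * (D * t))"
    using exp_le_prod_measure_Ec_Omega_Int[OF assms(1-5)] unfolding D_def t_def
    by (intro prod_union_le_divide prod_measure_Ec_Omega_le_Fk finite_Omega[OF Ik_subset_atMost])
      (auto simp: mult.assoc)
  also have "\<dots> = ?PF * exp ((2 * D) * t)" by (simp add: exp_minus divide_inverse)
  also have "\<dots> \<le> ?PF * (1 + 2 * D * exp (2 * D * real s) * t)"
    using t \<alpha> unfolding D_def by (intro mult_left_mono exp_mult_le_one_plus) auto
  finally show ?thesis unfolding t_def by (simp add: mult.assoc)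
qed

theorem lemma7:
  fixes s :: nat and \<alpha> :: real
  assumes "s \<ge> 2" and "\<alpha> > 0"
  shows "\<exists>C. \<forall>i j :: nat. 2 \<le> i \<longrightarrow> i < j \<longrightarrow> Ik \<alpha> i \<inter> Ik \<alpha> j = {} \<longrightarrow>
    (\<Prod>\<omega>\<in>Omega s (Ik \<alpha> i) \<union> Omega s (Ik \<alpha> j). measure (RS s) (Ec s \<omega>))
      \<le> measure (RS s) (Fk s \<alpha> i) * measure (RS s) (Fk s \<alpha> j)
         * (1 + C * real j powr (- 1 / real s) * ln (real j))"
proof -
  define D where "D = real s ^ s * (\<alpha> + 1) ^ 2 * real (s - 1)"
  show ?thesis
    using prod_measure_Ec_Omega_union_le[OF assms] unfolding D_def[symmetric]
    by (intro exI[of _ "2 * D * exp (2 * D * real s)"] allI impI) auto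
qed

end
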